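(* Let $d\ge1$, $\lambda>0$, $\delta>0$, and let $f:\mathbb{R}^d\to\mathbb{R}$ satisfy: (A1) $f$ is continuous and has at least one minimizer; (A2) $\int_{\mathbb{R}^d}\exp(-f(y)/\delta)\,dy<+\infty$. Let $(x^k)_{k\in\mathbb{N}}$ be generated by ZOPPA. Then (i) $f^{\lambda,\delta}(x^k)\le f^{\lambda,\delta}(x^{k-1})-\frac{1}{2\lambda}\|x^k-x^{k-1}\|^2$ for all $k\ge1$, and (ii) $\|\nabla f^{\lambda,\delta}(x^k)\|=\frac{\|x^{k+1}-x^k\|}{\lambda}\to0$ as $k\to\infty$.
   Context: The zeroth-order proximal operator is $\operatorname{zprox}^\delta_{\lambda,f}(x)=\dfrac{\mathbb{E}_{y\sim\mathcal N(x,\lambda\delta I)}[y\exp(-f(y)/\delta)]}{\mathbb{E}_{y\sim\mathcal N(x,\lambda\delta I)}[\exp(-f(y)/\delta)]}$; the soft Moreau envelope is $f^{\lambda,\delta}(x)=-\delta\log\mathbb{E}_{y\sim\mathcal N(x,\lambda\delta I)}[\exp(-f(y)/\delta)]$. ZOPPA: given $x^0\in\mathbb{R}^d$, iterate $x^{k+1}=\operatorname{zprox}^\delta_{\lambda,f}(x^k)$. *)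

theory Defs
  imports "HOL-Analysis.Analysis"
begin

definition gauss_density :: "real \<Rightarrow> 'a::euclidean_space \<Rightarrow> 'a \<Rightarrow> real" where
  "gauss_density s x y = (2 * pi * s) powr (- real DIM('a) / 2) * exp (- (norm (y - x))\<^sup>2 / (2 * s))"

definition gauss_expect :: "real \<Rightarrow> 'a::euclidean_space \<Rightarrow> ('a \<Rightarrow> 'b::{banach,second_countable_topology}) \<Rightarrow> 'b" where
  "gauss_expect s x g = (\<integral>y. gauss_density s x y *\<^sub>R g y \<partial>lborel)"

definition zprox :: "real \<Rightarrow> real \<Rightarrow> ('a::euclidean_space \<Rightarrow> real) \<Rightarrow> 'a \<Rightarrow> 'a" where
  "zprox lam del f x =
     (1 / gauss_expect (lam * del) x (\<lambda>y. exp (- f y / del))) *\<^sub>R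
       gauss_expect (lam * del) x (\<lambda>y. exp (- f y / del) *\<^sub>R y)"

definition soft_moreau :: "real \<Rightarrow> real \<Rightarrow> ('a::euclidean_space \<Rightarrow> real) \<Rightarrow> 'a \<Rightarrow> real" where
  "soft_moreau lam del f x = - del * ln (gauss_expect (lam * del) x (\<lambda>y. exp (- f y / del)))"

end

theory Submission
  imports Defs
begin

(* With s = lam * del and the Gibbs weight g = exp (- f / del), the function
     phi x = s * ln (gauss_expect s x g) + |x|^2 / 2
          = s * ln (integral of exp (<x, y> / s) * exp (- |y|^2 / (2 s)) * g y dy) + const
   is a log-partition function.  Integrating the tangent-line bound exp t >= exp c * (1 + t - c)
   against the Gaussian-tilted weight gives phi x' >= phi x + <zprox x, x' - x>, where zprox x is
   the barycenter of that weight.  By dominated convergence zprox is continuous, so phi is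
   differentiable with gradient zprox, and soft_moreau = (|x|^2 / 2 - phi) / lam has gradient
   (x - zprox x) / lam.  Taking x' = zprox x gives the sufficient decrease (i); the envelope is
   bounded below because the Gaussian density is bounded, so the squared steps are summable and
   the gradients tend to zero. *)

lemma tendsto_zero_of_sufficient_decrease:
  fixes a :: "nat \<Rightarrow> real" and v :: "nat \<Rightarrow> 'b::real_normed_vector"
  assumes c: "c > 0" and decrease: "\<And>k. a (Suc k) \<le> a k - c * (norm (v k))\<^sup>2"
    and bounded: "\<And>k. B \<le> a k"
  shows "v \<longlonglongrightarrow> 0"
proof -
  have partial_sums: "(\<Sum>k<n. c * (norm (v k))\<^sup>2) \<le> a 0 - a n" for n
  proof (induction n)
    case (Suc n)
    then show ?case using decrease[of n] by simp
  qed simp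
  have "summable (\<lambda>k. c * (norm (v k))\<^sup>2)"
  proof (rule summableI_nonneg_bounded)
    show "(\<Sum>k<n. c * (norm (v k))\<^sup>2) \<le> a 0 - B" for n
      using partial_sums[of n] bounded[of n] by linarith
  qed (use c in simp)
  then have "summable (\<lambda>k. (norm (v k))\<^sup>2)"
    using c by simp
  then have "(\<lambda>k. (norm (v k))\<^sup>2) \<longlonglongrightarrow> 0"
    by (rule summable_LIMSEQ_zero)
  then have "(\<lambda>k. sqrt ((norm (v k))\<^sup>2)) \<longlonglongrightarrow> 0"
    using tendsto_real_sqrt by fastforce
  then show ?thesis by (simp add: tendsto_norm_zero_iff)
qed

lemma GDERIV_of_continuous_subgradient:
  fixes V :: "'a::real_inner \<Rightarrow> real"
  assumes subgradient: "\<And>y z. V y + inner (G y) (z - y) \<le> V z"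
    and cont: "isCont G x"
  shows "GDERIV V x :> G x"
  unfolding gderiv_def has_derivative_iff_norm
proof
  show "bounded_linear (\<lambda>h. inner h (G x))" by (rule bounded_linear_inner_left)
  have remainder_le: "norm (V y - V x - inner (y - x) (G x)) \<le> norm (G y - G x) * norm (y - x)" for y
  proof -
    have "0 \<le> V y - V x - inner (G x) (y - x)"
      using subgradient[of x y] by simp
    moreover have "V y - V x \<le> inner (G y) (y - x)"
      using subgradient[of y x] by (simp add: inner_diff_right)
    then have "V y - V x - inner (G x) (y - x) \<le> inner (G y - G x) (y - x)"
      by (simp add: inner_diff_left)
    moreover have "inner (G y - G x) (y - x) \<le> norm (G y - G x) * norm (y - x)"
      by (rule norm_cauchy_schwarz)
    ultimately show ?thesis
      by (simp add: inner_commute)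
  qed
  have ratio_le: "norm (V y - V x - inner (y - x) (G x)) / norm (y - x) \<le> norm (G y - G x)" for y
    using remainder_le[of y] by (cases "y = x") (simp_all add: divide_le_eq)
  have G_lim: "((\<lambda>y. norm (G y - G x)) \<longlongrightarrow> 0) (at x)"
    using cont by (simp add: isCont_def LIM_zero_iff tendsto_norm_zero)
  show "((\<lambda>y. norm (V y - V x - inner (y - x) (G x)) / norm (y - x)) \<longlongrightarrow> 0) (at x)"
    by (rule tendsto_sandwich[OF _ _ tendsto_const G_lim])
      (intro always_eventually allI divide_nonneg_nonneg norm_ge_zero ratio_le)+
qed

lemma GDERIV_half_norm_squared: "GDERIV (\<lambda>y. (norm y)\<^sup>2 / 2) x :> x"
proof -
  have "((\<lambda>y. inner y y) has_derivative (\<lambda>h. inner x h + inner h x)) (at x)"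
    by (rule has_derivative_inner[OF has_derivative_ident has_derivative_ident])
  then have "((\<lambda>y. 1 / 2 * inner y y) has_derivative (\<lambda>h. 1 / 2 * (inner x h + inner h x))) (at x)"
    by (rule has_derivative_mult_right)
  then show ?thesis
    by (simp add: gderiv_def power2_norm_eq_inner inner_commute)
qed

lemma isCont_integral_dominated:
  fixes F :: "'p::metric_space \<Rightarrow> 'a \<Rightarrow> 'b::{banach,second_countable_topology}"
  assumes measurable: "\<And>p. F p \<in> borel_measurable M"
    and cont: "\<And>y. isCont (\<lambda>p. F p y) p0"
    and w: "integrable M w" and r: "r > 0"
    and dominated: "\<And>p y. dist p p0 < r \<Longrightarrow> norm (F p y) \<le> w y"
  shows "isCont (\<lambda>p. \<integral>y. F p y \<partial>M) p0"
proof (rule continuous_at_sequentiallyI)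
  fix u assume u: "u \<longlonglongrightarrow> p0"
  then obtain N where N: "\<And>n. N \<le> n \<Longrightarrow> dist (u n) p0 < r"
    using tendstoD[OF u r] by (auto simp: eventually_sequentially)
  show "(\<lambda>n. \<integral>y. F (u n) y \<partial>M) \<longlonglongrightarrow> (\<integral>y. F p0 y \<partial>M)"
  proof (rule LIMSEQ_offset[where k = N], rule integral_dominated_convergence[where w = w])
    show "AE y in M. (\<lambda>n. F (u (n + N)) y) \<longlonglongrightarrow> F p0 y"
      using isCont_tendsto_compose[OF cont LIMSEQ_ignore_initial_segment[OF u]] by simp
    show "AE y in M. norm (F (u (n + N)) y) \<le> w y" for n
      using N[of "n + N"] by (auto intro: dominated)
  qed (use measurable w in auto)
qed

lemma mult_exp_neg_le_one: "a * exp (- a) \<le> (1::real)"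
proof -
  have "a \<le> exp a" using exp_ge_add_one_self[of a] by linarith
  then show ?thesis by (simp add: exp_minus field_simps)
qed

lemma mult_exp_neg_square_le:
  fixes s t :: real
  assumes "s > 0"
  shows "t * exp (- t\<^sup>2 / (2 * s)) \<le> 1 + 2 * s"
proof -
  define a where "a = t\<^sup>2 / (2 * s)"
  have "2 * t \<le> 1 + t\<^sup>2"
    using zero_le_power2[of "t - 1"] by (simp add: power2_diff)
  then have "t \<le> 1 + t\<^sup>2"
    using zero_le_power2[of t] by linarith
  then have "t * exp (- a) \<le> (1 + t\<^sup>2) * exp (- a)"
    by (simp add: mult_right_mono)
  also have "\<dots> = exp (- a) + 2 * s * (a * exp (- a))"
    using assms by (simp add: a_def algebra_simps)
  also have "\<dots> \<le> 1 + 2 * s"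
    using assms mult_exp_neg_le_one[of a] by (simp add: a_def add_mono)
  finally show ?thesis by (simp add: a_def)
qed

lemma gauss_density_pos: "s > 0 \<Longrightarrow> gauss_density s x y > 0"
  by (simp add: gauss_density_def)

lemma gauss_density_le:
  fixes x y :: "'a::euclidean_space"
  shows "s > 0 \<Longrightarrow> gauss_density s x y \<le> (2 * pi * s) powr (- real DIM('a) / 2)"
  unfolding gauss_density_def by (simp add: mult_left_le)

lemma gauss_density_mult_norm_le:
  fixes x y :: "'a::euclidean_space"
  assumes s: "s > 0"
  shows "gauss_density s x y * norm y \<le> (2 * pi * s) powr (- real DIM('a) / 2) * (1 + 2 * s + norm x)"
proof -
  define E where "E = exp (- (norm (y - x))\<^sup>2 / (2 * s))"
  have "E \<le> 1" using s by (simp add: E_def)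
  have "E * norm y \<le> E * norm (y - x) + E * norm x"
    using norm_triangle_sub[of y x] by (simp add: E_def flip: distrib_left)
  also have "\<dots> \<le> (1 + 2 * s) + norm x"
  proof (rule add_mono)
    show "E * norm (y - x) \<le> 1 + 2 * s"
      using mult_exp_neg_square_le[OF s, of "norm (y - x)"] by (simp add: E_def mult.commute)
    show "E * norm x \<le> norm x"
      using \<open>E \<le> 1\<close> by (simp add: mult_left_le_one_le E_def)
  qed
  finally show ?thesis
    using s by (simp add: gauss_density_def E_def mult_left_mono flip: mult.assoc)
qed

lemma borel_measurable_gauss_density [measurable]:
  "gauss_density s x \<in> borel_measurable lborel"
  unfolding gauss_density_def by measurable

lemma isCont_gauss_density: "s > 0 \<Longrightarrow> isCont (\<lambda>x. gauss_density s x y) x0"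
  unfolding gauss_density_def by (intro continuous_intros) auto

lemma gauss_density_shift:
  "gauss_density s x' y = gauss_density s x y * exp ((2 * inner (y - x) (x' - x) - (norm (x' - x))\<^sup>2) / (2 * s))"
proof -
  have square_diff: "(norm (y - x))\<^sup>2 - (norm (y - x'))\<^sup>2 = 2 * inner (y - x) (x' - x) - (norm (x' - x))\<^sup>2"
    by (simp add: power2_norm_eq_inner inner_diff_left inner_diff_right inner_commute algebra_simps)
  have exponent: "- (norm (y - x'))\<^sup>2 / (2 * s)
      = - (norm (y - x))\<^sup>2 / (2 * s) + ((norm (y - x))\<^sup>2 - (norm (y - x'))\<^sup>2) / (2 * s)"
    by (simp add: diff_divide_distrib)
  show ?thesis
    unfolding gauss_density_def exponent square_diff exp_add by (simp add: mult.assoc)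
qed

lemma gauss_density_shift_ge:
  assumes s: "s > 0"
  shows "exp ((2 * inner (z - x) (x' - x) - (norm (x' - x))\<^sup>2) / (2 * s))
      * (1 + inner (y - z) (x' - x) / s) * gauss_density s x y \<le> gauss_density s x' y"
proof -
  define c where "c = (2 * inner (z - x) (x' - x) - (norm (x' - x))\<^sup>2) / (2 * s)"
  define e where "e = (2 * inner (y - x) (x' - x) - (norm (x' - x))\<^sup>2) / (2 * s)"
  have e_c: "e - c = inner (y - z) (x' - x) / s"
    using s by (simp add: e_def c_def inner_diff_left field_simps)
  have "exp c * (1 + (e - c)) \<le> exp c * exp (e - c)"
    by (intro mult_left_mono exp_ge_add_one_self) simp
  also have "\<dots> = exp e"
    by (simp add: exp_diff)
  finally have "exp c * (1 + inner (y - z) (x' - x) / s) \<le> exp e"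
    unfolding e_c .
  then show ?thesis
    using gauss_density_pos[OF s, of x y]
    by (simp add: gauss_density_shift[of s x' y x] c_def e_def mult_right_mono mult.commute)
qed

lemma gauss_expect_real:
  "gauss_expect s x h = (\<integral>y. gauss_density s x y * h y \<partial>lborel)"
  by (simp add: gauss_expect_def)

definition gauss_barycenter :: "real \<Rightarrow> ('a::euclidean_space \<Rightarrow> real) \<Rightarrow> 'a \<Rightarrow> 'a" where
  "gauss_barycenter s g x = (1 / gauss_expect s x g) *\<^sub>R gauss_expect s x (\<lambda>y. g y *\<^sub>R y)"

definition gauss_log_partition :: "real \<Rightarrow> ('a::euclidean_space \<Rightarrow> real) \<Rightarrow> 'a \<Rightarrow> real" where
  "gauss_log_partition s g x = s * ln (gauss_expect s x g) + (norm x)\<^sup>2 / 2"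

locale gauss_weight =
  fixes s :: real and g :: "'a::euclidean_space \<Rightarrow> real"
  assumes s_pos: "s > 0"
    and g_measurable [measurable]: "g \<in> borel_measurable lborel"
    and g_integrable: "integrable lborel g"
    and g_pos: "\<And>y. g y > 0"
begin

lemma gauss_weight_le:
  "norm (gauss_density s x y * g y) \<le> (2 * pi * s) powr (- real DIM('a) / 2) * g y"
proof -
  have "norm (gauss_density s x y * g y) = gauss_density s x y * g y"
    using gauss_density_pos[OF s_pos, of x y] g_pos[of y] by simp
  also have "\<dots> \<le> (2 * pi * s) powr (- real DIM('a) / 2) * g y"
    using gauss_density_le[OF s_pos] g_pos[of y] by (intro mult_right_mono) auto
  finally show ?thesis .
qed

lemma gauss_moment_weight_le:
  "norm (gauss_density s x y *\<^sub>R (g y *\<^sub>R y))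
     \<le> (2 * pi * s) powr (- real DIM('a) / 2) * (1 + 2 * s + norm x) * g y"
proof -
  have "norm (gauss_density s x y *\<^sub>R (g y *\<^sub>R y)) = gauss_density s x y * norm y * g y"
    using gauss_density_pos[OF s_pos, of x y] g_pos[of y] by simp
  also have "\<dots> \<le> (2 * pi * s) powr (- real DIM('a) / 2) * (1 + 2 * s + norm x) * g y"
    using gauss_density_mult_norm_le[OF s_pos] g_pos[of y] by (intro mult_right_mono) auto
  finally show ?thesis .
qed

lemma integrable_gauss_weight: "integrable lborel (\<lambda>y. gauss_density s x y * g y)"
proof (rule Bochner_Integration.integrable_bound)
  show "integrable lborel (\<lambda>y. (2 * pi * s) powr (- real DIM('a) / 2) * g y)"
    using g_integrable by simp
  show "AE y in lborel. norm (gauss_density s x y * g y)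
          \<le> norm ((2 * pi * s) powr (- real DIM('a) / 2) * g y)"
    by (intro AE_I2 order_trans[OF gauss_weight_le]) simp
qed simp

lemma integrable_gauss_moment: "integrable lborel (\<lambda>y. gauss_density s x y *\<^sub>R (g y *\<^sub>R y))"
proof (rule Bochner_Integration.integrable_bound)
  show "integrable lborel (\<lambda>y. (2 * pi * s) powr (- real DIM('a) / 2) * (1 + 2 * s + norm x) * g y)"
    using g_integrable by simp
  show "AE y in lborel. norm (gauss_density s x y *\<^sub>R (g y *\<^sub>R y))
          \<le> norm ((2 * pi * s) powr (- real DIM('a) / 2) * (1 + 2 * s + norm x) * g y)"
    by (intro AE_I2 order_trans[OF gauss_moment_weight_le]) simp
qed simp

lemma gauss_expect_pos: "gauss_expect s x g > 0"
proof -
  have nonneg: "AE y in lborel. 0 \<le> gauss_density s x y * g y"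
    using gauss_density_pos[OF s_pos] g_pos by (intro AE_I2 less_imp_le mult_pos_pos)
  have "gauss_expect s x g \<noteq> 0"
  proof
    assume "gauss_expect s x g = 0"
    then have "AE y in lborel. gauss_density s x y * g y = 0"
      using integral_nonneg_eq_0_iff_AE[OF integrable_gauss_weight nonneg]
      by (simp add: gauss_expect_real)
    then have "AE y::'a in lborel. False"
      by (rule eventually_mono)
        (simp add: gauss_density_pos[OF s_pos, THEN less_imp_not_eq2] g_pos[THEN less_imp_not_eq2])
    then show False
      by (simp add: eventually_False ae_filter_eq_bot_iff)
  qed
  moreover have "gauss_expect s x g \<ge> 0"
    unfolding gauss_expect_real using integral_nonneg_AE[OF nonneg] .
  ultimately show ?thesis by simp
qed

lemma gauss_expect_le: "gauss_expect s x g \<le> (2 * pi * s) powr (- real DIM('a) / 2) * integral\<^sup>L lborel g"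
proof -
  have "gauss_expect s x g \<le> (\<integral>y. (2 * pi * s) powr (- real DIM('a) / 2) * g y \<partial>lborel)"
    unfolding gauss_expect_real
  proof (rule integral_mono[OF integrable_gauss_weight])
    show "gauss_density s x y * g y \<le> (2 * pi * s) powr (- real DIM('a) / 2) * g y" for y
      using order_trans[OF abs_ge_self gauss_weight_le[of x y, unfolded real_norm_def]] .
  qed (use g_integrable in simp)
  then show ?thesis by simp
qed

lemma isCont_gauss_expect: "isCont (\<lambda>x. gauss_expect s x g) x0"
  unfolding gauss_expect_def
proof (rule isCont_integral_dominated[where r = 1])
  show "isCont (\<lambda>x. gauss_density s x y *\<^sub>R g y) x0" for y
    using isCont_gauss_density[OF s_pos] by (intro continuous_intros)
  show "norm (gauss_density s x y *\<^sub>R g y) \<le> (2 * pi * s) powr (- real DIM('a) / 2) * g y" for x y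
    using gauss_weight_le[of x y] by (simp only: real_scaleR_def)
qed (use g_integrable in simp_all)

lemma isCont_gauss_moment: "isCont (\<lambda>x. gauss_expect s x (\<lambda>y. g y *\<^sub>R y)) x0"
  unfolding gauss_expect_def
proof (rule isCont_integral_dominated[where r = 1])
  show "isCont (\<lambda>x. gauss_density s x y *\<^sub>R (g y *\<^sub>R y)) x0" for y
    using isCont_gauss_density[OF s_pos] by (intro continuous_intros)
  show "norm (gauss_density s x y *\<^sub>R (g y *\<^sub>R y))
      \<le> (2 * pi * s) powr (- real DIM('a) / 2) * (2 + 2 * s + norm x0) * g y"
    if "dist x x0 < 1" for x y
  proof -
    have "norm x \<le> 1 + norm x0"
      using that norm_triangle_ineq2[of x x0] by (simp add: dist_norm)
    then show ?thesis
      using order_trans[OF gauss_moment_weight_le] g_pos[of y] s_pos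
      by (force intro: mult_right_mono mult_left_mono)
  qed
qed (use g_integrable in simp_all)

lemma isCont_gauss_barycenter: "isCont (gauss_barycenter s g) x0"
proof -
  have "gauss_expect s x0 g \<noteq> 0"
    using gauss_expect_pos[of x0] by simp
  then show ?thesis
    unfolding gauss_barycenter_def[abs_def]
    by (intro continuous_intros isCont_gauss_expect isCont_gauss_moment) auto
qed

lemma gauss_moment_eq: "gauss_expect s x (\<lambda>y. g y *\<^sub>R y) = gauss_expect s x g *\<^sub>R gauss_barycenter s g x"
  using gauss_expect_pos[of x] by (simp add: gauss_barycenter_def)

lemma gauss_centered_eq:
  "(gauss_density s x y * g y) *\<^sub>R (y - z)
     = gauss_density s x y *\<^sub>R (g y *\<^sub>R y) - (gauss_density s x y * g y) *\<^sub>R z"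
  by (simp add: scaleR_diff_right)

lemma integrable_gauss_centered:
  "integrable lborel (\<lambda>y. (gauss_density s x y * g y) *\<^sub>R (y - z))"
  unfolding gauss_centered_eq
  by (intro Bochner_Integration.integrable_diff integrable_gauss_moment integrable_scaleR_left
      integrable_gauss_weight)

lemma integral_gauss_centered:
  "(\<integral>y. (gauss_density s x y * g y) *\<^sub>R (y - gauss_barycenter s g x) \<partial>lborel) = 0"
proof -
  have "(\<integral>y. (gauss_density s x y * g y) *\<^sub>R (y - gauss_barycenter s g x) \<partial>lborel)
      = (\<integral>y. gauss_density s x y *\<^sub>R (g y *\<^sub>R y) \<partial>lborel)
        - (\<integral>y. (gauss_density s x y * g y) *\<^sub>R gauss_barycenter s g x \<partial>lborel)"
    unfolding gauss_centered_eq
    by (rule Bochner_Integration.integral_diff[OF integrable_gauss_moment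
          integrable_scaleR_left[OF integrable_gauss_weight]])
  also have "\<dots> = gauss_expect s x (\<lambda>y. g y *\<^sub>R y) - gauss_expect s x g *\<^sub>R gauss_barycenter s g x"
    using integrable_gauss_weight by (simp add: gauss_expect_def)
  finally show ?thesis
    by (simp add: gauss_moment_eq)
qed


lemma gauss_expect_shift_ge:
  "exp ((2 * inner (gauss_barycenter s g x - x) (x' - x) - (norm (x' - x))\<^sup>2) / (2 * s)) * gauss_expect s x g
     \<le> gauss_expect s x' g"
    (is "exp ?c * _ \<le> _")
proof -
  define z where "z = gauss_barycenter s g x"
  define lower where "lower y = exp ?c * (gauss_density s x y * g y)
      + exp ?c / s * inner ((gauss_density s x y * g y) *\<^sub>R (y - z)) (x' - x)" for y
  have "lower y \<le> gauss_density s x' y * g y" for y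
  proof -
    have "lower y = exp ?c * (1 + inner (y - z) (x' - x) / s) * gauss_density s x y * g y"
      unfolding lower_def inner_scaleR_left using s_pos by (simp add: field_simps)
    also have "\<dots> \<le> gauss_density s x' y * g y"
      using gauss_density_shift_ge[OF s_pos, of z x x' y] g_pos[of y]
      by (simp add: z_def mult_right_mono)
    finally show ?thesis .
  qed
  moreover have "integrable lborel lower"
    unfolding lower_def using integrable_gauss_weight integrable_gauss_centered
    by (intro Bochner_Integration.integrable_add integrable_mult_right integrable_inner_left)
  ultimately have "integral\<^sup>L lborel lower \<le> gauss_expect s x' g"
    unfolding gauss_expect_real using integrable_gauss_weight by (intro integral_mono)
  moreover have "integral\<^sup>L lborel lower
      = exp ?c * gauss_expect s x g
        + exp ?c / s * inner (\<integral>y. (gauss_density s x y * g y) *\<^sub>R (y - z) \<partial>lborel) (x' - x)"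
    unfolding lower_def gauss_expect_real
    using integrable_gauss_weight integrable_gauss_centered
    by (simp only: Bochner_Integration.integral_add integrable_mult_right integrable_inner_left
        integral_mult_right_zero integral_inner_left)
  ultimately show ?thesis
    by (simp add: z_def integral_gauss_centered)
qed

lemma gauss_log_partition_subgradient:
  "gauss_log_partition s g x + inner (gauss_barycenter s g x) (x' - x) \<le> gauss_log_partition s g x'"
proof -
  define h where "h = x' - x"
  define z where "z = gauss_barycenter s g x"
  define c where "c = (2 * inner (z - x) h - (norm h)\<^sup>2) / (2 * s)"
  have "ln (exp c * gauss_expect s x g) \<le> ln (gauss_expect s x' g)"
    using gauss_expect_shift_ge[of x x'] gauss_expect_pos
    by (subst ln_le_cancel_iff) (auto simp: c_def z_def h_def)
  then have "c + ln (gauss_expect s x g) \<le> ln (gauss_expect s x' g)"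
    using gauss_expect_pos[of x] by (simp add: ln_mult)
  then have "s * (c + ln (gauss_expect s x g)) \<le> s * ln (gauss_expect s x' g)"
    using s_pos by (intro mult_left_mono) auto
  moreover have "s * c = inner z h - inner x h - (norm h)\<^sup>2 / 2"
    using s_pos by (simp add: c_def inner_diff_left field_simps)
  ultimately have "s * ln (gauss_expect s x g) + inner z h - inner x h - (norm h)\<^sup>2 / 2
      \<le> s * ln (gauss_expect s x' g)"
    by (simp add: distrib_left)
  moreover have "(norm x')\<^sup>2 / 2 = (norm x)\<^sup>2 / 2 + inner x h + (norm h)\<^sup>2 / 2"
  proof -
    have "x' = x + h" by (simp add: h_def)
    then show ?thesis
      by (simp add: power2_norm_eq_inner inner_add_left inner_add_right inner_commute field_simps)
  qed
  moreover have "inner (gauss_barycenter s g x) (x' - x) = inner z h"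
    by (simp add: z_def h_def)
  ultimately show ?thesis
    unfolding gauss_log_partition_def by linarith
qed

lemma GDERIV_gauss_log_partition: "GDERIV (gauss_log_partition s g) x :> gauss_barycenter s g x"
  using gauss_log_partition_subgradient isCont_gauss_barycenter
  by (rule GDERIV_of_continuous_subgradient)

end

lemma zprox_eq_gauss_barycenter:
  "zprox lam del f = gauss_barycenter (lam * del) (\<lambda>y. exp (- f y / del))"
  by (simp add: fun_eq_iff zprox_def gauss_barycenter_def)

lemma soft_moreau_eq_gauss_log_partition:
  "lam \<noteq> 0 \<Longrightarrow> soft_moreau lam del f x
     = ((norm x)\<^sup>2 / 2 - gauss_log_partition (lam * del) (\<lambda>y. exp (- f y / del)) x) / lam"
  by (simp add: soft_moreau_def gauss_log_partition_def field_simps)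

locale zoppa_setting =
  fixes lam del :: real and f :: "'a::euclidean_space \<Rightarrow> real"
  assumes lam_pos: "lam > 0" and del_pos: "del > 0"
    and f_measurable [measurable]: "f \<in> borel_measurable lborel"
    and gibbs_integrable: "integrable lborel (\<lambda>y. exp (- f y / del))"

sublocale zoppa_setting \<subseteq> gauss_weight "lam * del" "\<lambda>y. exp (- f y / del)"
  using lam_pos del_pos gibbs_integrable by unfold_locales auto

context zoppa_setting
begin

lemma soft_moreau_zprox_le:
  "soft_moreau lam del f (zprox lam del f x)
     \<le> soft_moreau lam del f x - 1 / (2 * lam) * (norm (zprox lam del f x - x))\<^sup>2"
proof -
  define z where "z = zprox lam del f x"
  let ?P = "gauss_log_partition (lam * del) (\<lambda>y. exp (- f y / del))"
  have "?P x + inner z (z - x) \<le> ?P z"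
    using gauss_log_partition_subgradient by (simp add: z_def zprox_eq_gauss_barycenter)
  moreover have "(norm z)\<^sup>2 / 2 - inner z (z - x) = (norm x)\<^sup>2 / 2 - (norm (z - x))\<^sup>2 / 2"
    by (simp add: power2_norm_eq_inner inner_diff_left inner_diff_right inner_commute field_simps)
  ultimately have "((norm z)\<^sup>2 / 2 - ?P z) / lam \<le> ((norm x)\<^sup>2 / 2 - ?P x - (norm (z - x))\<^sup>2 / 2) / lam"
    using lam_pos by (intro divide_right_mono) auto
  then show ?thesis
    using lam_pos by (simp add: z_def soft_moreau_eq_gauss_log_partition diff_divide_distrib)
qed

lemma GDERIV_soft_moreau:
  "GDERIV (soft_moreau lam del f) x :> (1 / lam) *\<^sub>R (x - zprox lam del f x)"
proof -
  let ?P = "gauss_log_partition (lam * del) (\<lambda>y. exp (- f y / del))"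
  have "GDERIV (\<lambda>y. (norm y)\<^sup>2 / 2 - ?P y) x :> x - zprox lam del f x"
    unfolding zprox_eq_gauss_barycenter
    by (rule GDERIV_diff[OF GDERIV_half_norm_squared GDERIV_gauss_log_partition])
  then have "((\<lambda>y. 1 / lam * ((norm y)\<^sup>2 / 2 - ?P y))
      has_derivative (\<lambda>h. 1 / lam * inner h (x - zprox lam del f x))) (at x)"
    unfolding gderiv_def by (rule has_derivative_mult_right)
  moreover have "soft_moreau lam del f = (\<lambda>y. 1 / lam * ((norm y)\<^sup>2 / 2 - ?P y))"
    using lam_pos by (simp add: fun_eq_iff soft_moreau_eq_gauss_log_partition)
  ultimately show ?thesis
    by (simp add: gderiv_def)
qed

lemma soft_moreau_lower_bound:
  "- del * ln ((2 * pi * (lam * del)) powr (- real DIM('a) / 2) * (\<integral>y. exp (- f y / del) \<partial>lborel))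
     \<le> soft_moreau lam del f x"
proof -
  have "ln (gauss_expect (lam * del) x (\<lambda>y. exp (- f y / del)))
      \<le> ln ((2 * pi * (lam * del)) powr (- real DIM('a) / 2) * (\<integral>y. exp (- f y / del) \<partial>lborel))"
    using gauss_expect_pos gauss_expect_le by (intro ln_mono) auto
  then show ?thesis
    using del_pos by (simp add: soft_moreau_def)
qed

end

theorem theorem9:
  fixes f :: "'a::euclidean_space \<Rightarrow> real" and lam del :: real and x :: "nat \<Rightarrow> 'a"
  assumes lam: "lam > 0" and del: "del > 0"
    and A1_cont: "continuous_on UNIV f"
    and A1_min: "\<exists>xm. \<forall>y. f xm \<le> f y"
    and A2: "(\<integral>\<^sup>+ y. ennreal (exp (- f y / del)) \<partial>lborel) < \<infinity>"
    and zoppa: "\<And>k. x (Suc k) = zprox lam del f (x k)"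
  shows "(\<forall>k. soft_moreau lam del f (x (Suc k))
              \<le> soft_moreau lam del f (x k) - (1 / (2 * lam)) * (norm (x (Suc k) - x k))\<^sup>2)
       \<and> (\<forall>k. \<exists>G. GDERIV (soft_moreau lam del f) (x k) :> G \<and> norm G = norm (x (Suc k) - x k) / lam)
       \<and> (\<lambda>k. norm (x (Suc k) - x k) / lam) \<longlonglongrightarrow> 0"
proof -
  have f_measurable: "f \<in> borel_measurable lborel"
    using borel_measurable_continuous_onI[OF A1_cont] by simp
  then have "integrable lborel (\<lambda>y. exp (- f y / del))"
    using A2 by (intro integrableI_bounded) auto
  then interpret zoppa_setting lam del f
    using lam del f_measurable by unfold_locales
  have descent: "soft_moreau lam del f (x (Suc k))
      \<le> soft_moreau lam del f (x k) - 1 / (2 * lam) * (norm (x (Suc k) - x k))\<^sup>2" for k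
    using soft_moreau_zprox_le by (simp add: zoppa)
  have "GDERIV (soft_moreau lam del f) (x k) :> (1 / lam) *\<^sub>R (x k - x (Suc k))
      \<and> norm ((1 / lam) *\<^sub>R (x k - x (Suc k))) = norm (x (Suc k) - x k) / lam" for k
    using GDERIV_soft_moreau lam by (simp add: zoppa norm_minus_commute)
  moreover have "(\<lambda>k. x (Suc k) - x k) \<longlonglongrightarrow> 0"
    using lam
    by (intro tendsto_zero_of_sufficient_decrease[where c = "1 / (2 * lam)"
          and a = "\<lambda>k. soft_moreau lam del f (x k)", OF _ descent soft_moreau_lower_bound]) simp
  then have "(\<lambda>k. norm (x (Suc k) - x k) / lam) \<longlonglongrightarrow> 0"
    by (intro tendsto_divide_zero tendsto_norm_zero)
  ultimately show ?thesis
    using descent by blast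
qed

end
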